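(* If $Q$ is a Jordan loop of order $9$, then either $Q$ has exponent $3$ (i.e. $x^3=e$ for all $x\in Q$) or $Q$ is cyclic (i.e. $Q=\langle x\rangle$ for some $x\in Q$).
   Context: A loop is a set $Q$ with a binary operation (juxtaposition) and neutral element $e$ such that for all $a,b$ the equations $ax=b$, $ya=b$ have unique solutions. A Jordan loop is a commutative loop satisfying $x^2(yx)=(x^2y)x$. $x^3$ denotes $x(xx)$. $\langle x\rangle$ denotes the subloop generated by $x$ (the smallest subloop of $Q$ containing $x$). *)

theory Defs
  imports Main
begin

definition loop :: "'a set \<Rightarrow> ('a \<Rightarrow> 'a \<Rightarrow> 'a) \<Rightarrow> 'a \<Rightarrow> bool" where
  "loop Q m e \<longleftrightarrow>
     (\<forall>a\<in>Q. \<forall>b\<in>Q. m a b \<in> Q) \<and> e \<in> Q \<and>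
     (\<forall>a\<in>Q. m e a = a \<and> m a e = a) \<and>
     (\<forall>a\<in>Q. \<forall>b\<in>Q. \<exists>!x. x \<in> Q \<and> m a x = b) \<and>
     (\<forall>a\<in>Q. \<forall>b\<in>Q. \<exists>!y. y \<in> Q \<and> m y a = b)"

definition jordan_loop :: "'a set \<Rightarrow> ('a \<Rightarrow> 'a \<Rightarrow> 'a) \<Rightarrow> 'a \<Rightarrow> bool" where
  "jordan_loop Q m e \<longleftrightarrow> loop Q m e \<and>
     (\<forall>x\<in>Q. \<forall>y\<in>Q. m x y = m y x) \<and>
     (\<forall>x\<in>Q. \<forall>y\<in>Q. m (m x x) (m y x) = m (m (m x x) y) x)"

definition subloop :: "'a set \<Rightarrow> 'a set \<Rightarrow> ('a \<Rightarrow> 'a \<Rightarrow> 'a) \<Rightarrow> 'a \<Rightarrow> bool" where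
  "subloop S Q m e \<longleftrightarrow> S \<subseteq> Q \<and> loop S m e"

definition gen_subloop :: "'a set \<Rightarrow> ('a \<Rightarrow> 'a \<Rightarrow> 'a) \<Rightarrow> 'a \<Rightarrow> 'a \<Rightarrow> 'a set" where
  "gen_subloop Q m e x = \<Inter>{S. subloop S Q m e \<and> x \<in> S}"

definition cube :: "('a \<Rightarrow> 'a \<Rightarrow> 'a) \<Rightarrow> 'a \<Rightarrow> 'a" where
  "cube m x = m x (m x x)"

end

theory Submission
  imports Defs
begin

text \<open>
  In a commutative loop of odd order squaring is onto. The Jordan identity gives
  x^2 x^n = x^(n+2) for the right-nested powers, hence (x^2)^n = x^(2n). So an element of
  even order is the square of an element of twice its order; iterating contradicts
  finiteness, hence all orders are odd and x^2 has the same powers as x.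

  Now let |Q| = 9 and x^3 \<noteq> e, so x has order 5, 7 or 9. Left multiplication by e, x and x^2
  maps the set P of powers of x into itself, hence also its complement, and for d outside P
  the elements d, x d, x^2 d are distinct; this rules out order 7. Left multiplication by
  x^(2^i), i \<ge> 1, preserves P as well; for order 5 these are all nontrivial powers since 2
  generates the units modulo 5, so u \<mapsto> u d embeds P into its complement of size 4.
  Hence x has order 9 and generates Q.
\<close>

lemma involution_has_fixpoint:
  assumes "finite A" and "odd (card A)"
    and "\<And>a. a \<in> A \<Longrightarrow> f a \<in> A" and "\<And>a. a \<in> A \<Longrightarrow> f (f a) = a"
  shows "\<exists>a\<in>A. f a = a"
  using assms
proof (induction "card A" arbitrary: A rule: less_induct)
  case less
  show ?case
  proof (rule ccontr)
    assume no_fix: "\<not> (\<exists>a\<in>A. f a = a)"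
    from \<open>odd (card A)\<close> have "A \<noteq> {}"
      by (rule contrapos_pn) simp
    then obtain a where a: "a \<in> A"
      by blast
    define B where "B = A - {a, f a}"
    have pair: "{a, f a} \<subseteq> A" "card {a, f a} = 2"
      using a no_fix less.prems(3) by auto
    have card_B: "card B = card A - 2"
      unfolding B_def using card_Diff_subset[OF _ pair(1)] pair(2) less.prems(1)
      by (simp add: finite_subset)
    have "2 \<le> card A"
      using card_mono[OF less.prems(1) pair(1)] pair(2) by simp
    moreover have "\<And>b. b \<in> B \<Longrightarrow> f b \<in> B"
      unfolding B_def using less.prems(3,4) a by auto metis
    ultimately have "\<exists>b\<in>B. f b = b"
      using less.hyps[of B] less.prems card_B by (auto simp: B_def)
    then show False
      using no_fix by (auto simp: B_def)
  qed
qed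

lemma loop_closed: "loop Q m e \<Longrightarrow> a \<in> Q \<Longrightarrow> b \<in> Q \<Longrightarrow> m a b \<in> Q"
  and loop_unit_in: "loop Q m e \<Longrightarrow> e \<in> Q"
  unfolding loop_def by simp_all

locale finite_loop =
  fixes Q :: "'a set" and m :: "'a \<Rightarrow> 'a \<Rightarrow> 'a" and e :: 'a
  assumes loop: "loop Q m e" and finite_Q: "finite Q"
begin

lemma closed: "a \<in> Q \<Longrightarrow> b \<in> Q \<Longrightarrow> m a b \<in> Q"
  and unit_in: "e \<in> Q"
  by (fact loop_closed[OF loop], fact loop_unit_in[OF loop])

lemma left_unit: "a \<in> Q \<Longrightarrow> m e a = a"
  and right_unit: "a \<in> Q \<Longrightarrow> m a e = a"
  using loop unfolding loop_def by simp_all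

lemma left_div_unique: "\<forall>a\<in>Q. \<forall>b\<in>Q. \<exists>!x. x \<in> Q \<and> m a x = b"
  using loop unfolding loop_def by (elim conjE) assumption

lemma right_div_unique: "\<forall>a\<in>Q. \<forall>b\<in>Q. \<exists>!y. y \<in> Q \<and> m y a = b"
  using loop unfolding loop_def by (elim conjE) assumption

lemma left_cancel:
  assumes "a \<in> Q" "y \<in> Q" "z \<in> Q" "m a y = m a z" shows "y = z"
  using left_div_unique assms closed by blast

lemma right_cancel:
  assumes "a \<in> Q" "y \<in> Q" "z \<in> Q" "m y a = m z a" shows "y = z"
  using right_div_unique assms closed by blast

definition pow :: "'a \<Rightarrow> nat \<Rightarrow> 'a" where
  "pow x n = (m x ^^ n) e"

definition powers :: "'a \<Rightarrow> 'a set" where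
  "powers x = range (pow x)"

lemma pow_0 [simp]: "pow x 0 = e"
  and pow_Suc: "pow x (Suc n) = m x (pow x n)"
  and pow_add: "pow x (a + b) = (m x ^^ a) (pow x b)"
  by (simp_all add: pow_def funpow_add)

lemma pow_in: "x \<in> Q \<Longrightarrow> pow x n \<in> Q"
  by (induction n) (simp_all add: pow_Suc closed unit_in)

lemma pow_1: "x \<in> Q \<Longrightarrow> pow x 1 = x"
  and pow_2: "x \<in> Q \<Longrightarrow> pow x 2 = m x x"
  and pow_3: "x \<in> Q \<Longrightarrow> pow x 3 = cube m x"
  by (simp_all add: pow_def right_unit numeral_2_eq_2 numeral_3_eq_3 cube_def)

lemma pow_left_cancel:
  "x \<in> Q \<Longrightarrow> pow x (i + a) = pow x (i + b) \<Longrightarrow> pow x a = pow x b"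
  by (induction i) (auto simp: pow_Suc dest: left_cancel[OF _ pow_in pow_in])

lemma pow_eq_imp_pow_diff_unit:
  "x \<in> Q \<Longrightarrow> i < j \<Longrightarrow> pow x i = pow x j \<Longrightarrow> pow x (j - i) = e"
  using pow_left_cancel[of x i "j - i" 0] by simp

lemma pow_returns_to_unit:
  assumes "x \<in> Q" shows "\<exists>n>0. pow x n = e"
proof -
  have "card (pow x ` {0..card Q}) \<le> card Q"
    by (rule card_mono[OF finite_Q]) (auto simp: pow_in assms)
  then have "\<not> inj_on (pow x) {0..card Q}"
    using card_image by fastforce
  then obtain i j where "i \<noteq> j" "pow x i = pow x j"
    unfolding inj_on_def by blast
  then obtain i j where "i < j" "pow x i = pow x j"
    by (metis nat_neq_iff)
  then show ?thesis
    using pow_eq_imp_pow_diff_unit[OF assms] zero_less_diff by blast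
qed

definition ord :: "'a \<Rightarrow> nat" where
  "ord x = (LEAST n. 0 < n \<and> pow x n = e)"

lemma ord_pos: "x \<in> Q \<Longrightarrow> 0 < ord x"
  and pow_ord: "x \<in> Q \<Longrightarrow> pow x (ord x) = e"
  unfolding ord_def using LeastI_ex[OF pow_returns_to_unit] by blast+

lemma pow_ne_unit_below_ord: "0 < n \<Longrightarrow> n < ord x \<Longrightarrow> pow x n \<noteq> e"
  unfolding ord_def using not_less_Least by blast

lemma pow_mult_ord: "x \<in> Q \<Longrightarrow> pow x (ord x * c) = e"
proof (induction c)
  case (Suc c)
  then show ?case
    using pow_add[of x "ord x * c" "ord x"] pow_ord by (simp add: pow_def add.commute)
qed simp

lemma pow_mod_ord: "x \<in> Q \<Longrightarrow> pow x n = pow x (n mod ord x)"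
  using pow_add[of x "n mod ord x" "ord x * (n div ord x)"] pow_mult_ord
  by (simp add: pow_def)

lemma pow_eq_unit_iff:
  assumes x: "x \<in> Q" shows "pow x n = e \<longleftrightarrow> ord x dvd n"
proof
  assume "pow x n = e"
  then have "pow x (n mod ord x) = e"
    using pow_mod_ord[OF x] by simp
  then have "n mod ord x = 0"
    using pow_ne_unit_below_ord mod_less_divisor[OF ord_pos[OF x]] by blast
  then show "ord x dvd n" by auto
next
  show "ord x dvd n \<Longrightarrow> pow x n = e"
    using pow_mult_ord[OF x] by auto
qed

lemma ord_unit_iff: "x \<in> Q \<Longrightarrow> ord x = 1 \<longleftrightarrow> x = e"
  using pow_eq_unit_iff[of x 1] pow_1 by auto

lemma powers_eq:
  assumes x: "x \<in> Q" shows "powers x = pow x ` {..<ord x}"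
proof -
  have "pow x n \<in> pow x ` {..<ord x}" for n
    using pow_mod_ord[OF x, of n] mod_less_divisor[OF ord_pos[OF x], of n]
    by (intro rev_image_eqI[of "n mod ord x"]) simp_all
  then show ?thesis
    unfolding powers_def by blast
qed

lemma pow_inj_below_ord:
  assumes x: "x \<in> Q" shows "inj_on (pow x) {..<ord x}"
proof -
  have same: "i = j" if "i \<le> j" "j < ord x" "pow x i = pow x j" for i j
  proof (rule ccontr)
    assume "i \<noteq> j"
    then have "pow x (j - i) = e"
      using pow_eq_imp_pow_diff_unit[OF x] that by simp
    moreover have "0 < j - i" "j - i < ord x"
      using that \<open>i \<noteq> j\<close> by auto
    ultimately show False
      using pow_ne_unit_below_ord by blast
  qed
  show ?thesis
  proof (rule inj_onI)
    fix i j assume "i \<in> {..<ord x}" "j \<in> {..<ord x}" and eq: "pow x i = pow x j"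
    then show "i = j"
      using same[OF _ _ eq] same[OF _ _ eq[symmetric]] by (cases "i \<le> j") auto
  qed
qed

lemma card_powers: "x \<in> Q \<Longrightarrow> card (powers x) = ord x"
  using powers_eq pow_inj_below_ord by (simp add: card_image)

lemma powers_subset: "x \<in> Q \<Longrightarrow> powers x \<subseteq> Q"
  using pow_in by (auto simp: powers_def)

lemma ord_le_card:
  assumes x: "x \<in> Q" shows "ord x \<le> card Q"
proof -
  have "card (powers x) \<le> card Q"
    by (rule card_mono[OF finite_Q powers_subset[OF x]])
  then show ?thesis
    using card_powers[OF x] by simp
qed

lemma mult_preserves_powers: "m x ` powers x \<subseteq> powers x"
proof
  fix y assume "y \<in> m x ` powers x"
  then obtain n where "y = m x (pow x n)"
    by (auto simp: powers_def)
  then have "y = pow x (Suc n)"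
    by (simp add: pow_Suc)
  then show "y \<in> powers x"
    by (simp add: powers_def)
qed

lemma powers_subset_gen_subloop: "powers x \<subseteq> gen_subloop Q m e x"
proof -
  have "pow x n \<in> S" if "subloop S Q m e" "x \<in> S" for S n
  proof (induction n)
    case 0
    show ?case using that loop_unit_in[of S m e] by (simp add: subloop_def)
  next
    case (Suc n)
    then show ?case using that loop_closed[of S m e] by (simp add: subloop_def pow_Suc)
  qed
  then show ?thesis
    unfolding gen_subloop_def powers_def by blast
qed

lemma gen_subloop_if_ord_eq_card:
  assumes "x \<in> Q" "ord x = card Q" shows "gen_subloop Q m e x = Q"
proof
  have "subloop Q Q m e"
    by (simp add: subloop_def loop)
  then show "gen_subloop Q m e x \<subseteq> Q"
    unfolding gen_subloop_def using assms(1) by blast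
  have "powers x = Q"
    using card_subset_eq[OF finite_Q powers_subset] card_powers assms by simp
  then show "Q \<subseteq> gen_subloop Q m e x"
    using powers_subset_gen_subloop[of x] by simp
qed

text \<open>Being injective, the translation permutes the finite set A.\<close>

lemma left_mult_preserves_complement:
  assumes u: "u \<in> Q" and A: "A \<subseteq> Q" "m u ` A \<subseteq> A" and d: "d \<in> Q - A"
  shows "m u d \<in> Q - A"
proof -
  have "inj_on (m u) A"
    by (rule inj_onI) (use u A(1) left_cancel in blast)
  then have image: "m u ` A = A"
    by (rule endo_inj_surj[OF finite_subset[OF A(1) finite_Q] A(2)])
  have "m u d \<notin> A"
  proof
    assume "m u d \<in> A"
    then obtain a where "a \<in> A" "m u d = m u a"
      using image by (metis imageE)
    then show False
      using left_cancel[OF u] A(1) d by blast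
  qed
  then show ?thesis
    using closed u d by blast
qed

lemma card_le_card_complement:
  assumes S: "S \<subseteq> Q" and A: "A \<subseteq> Q" "A \<noteq> Q"
    and preserves: "\<And>u. u \<in> S \<Longrightarrow> m u ` A \<subseteq> A"
  shows "card S \<le> card (Q - A)"
proof -
  obtain d where d: "d \<in> Q - A"
    using A by blast
  have "inj_on (\<lambda>u. m u d) S"
    by (rule inj_onI) (use S d right_cancel in blast)
  moreover have "(\<lambda>u. m u d) ` S \<subseteq> Q - A"
    using left_mult_preserves_complement[OF _ A(1) preserves d] S by blast
  ultimately show ?thesis
    by (rule card_inj_on_le) (simp add: finite_Q)
qed

lemma card_Q_minus_powers: "x \<in> Q \<Longrightarrow> card (Q - powers x) = card Q - ord x"
  using card_Diff_subset[OF finite_subset[OF powers_subset finite_Q] powers_subset] card_powers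
  by simp

end

locale finite_jordan_loop = finite_loop +
  assumes comm: "a \<in> Q \<Longrightarrow> b \<in> Q \<Longrightarrow> m a b = m b a"
    and jordan_identity: "x \<in> Q \<Longrightarrow> y \<in> Q \<Longrightarrow> m (m x x) (m y x) = m (m (m x x) y) x"
begin

lemma square_mult_pow:
  assumes y: "y \<in> Q" shows "m (m y y) (pow y n) = pow y (n + 2)"
proof (induction n)
  case 0
  show ?case using y by (simp add: pow_Suc right_unit closed)
next
  case (Suc n)
  have "m (m y y) (pow y (Suc n)) = m (m y y) (m (pow y n) y)"
    using y pow_in comm by (simp add: pow_Suc)
  also have "\<dots> = m (m (m y y) (pow y n)) y"
    using jordan_identity[OF y pow_in[OF y]] .
  also have "\<dots> = m (pow y (n + 2)) y"
    by (simp only: Suc)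
  also have "\<dots> = m y (pow y (n + 2))"
    by (rule comm[OF pow_in[OF y] y])
  also have "\<dots> = pow y (Suc n + 2)"
    by (simp add: pow_Suc)
  finally show ?case .
qed

lemma pow_square:
  assumes y: "y \<in> Q" shows "pow (m y y) n = pow y (2 * n)"
proof (induction n)
  case (Suc n)
  then show ?case
    using square_mult_pow[OF y, of "2 * n"] by (simp add: pow_Suc)
qed simp

lemma ord_square_dvd_iff:
  assumes y: "y \<in> Q" shows "ord (m y y) dvd n \<longleftrightarrow> ord y dvd 2 * n"
  using pow_eq_unit_iff[OF closed[OF y y]] pow_eq_unit_iff[OF y] pow_square[OF y] by simp

lemma square_mult_preserves_powers: "y \<in> Q \<Longrightarrow> m (m y y) ` powers y \<subseteq> powers y"
  unfolding powers_def using square_mult_pow by (auto simp del: add_2_eq_Suc')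

lemma iter_square_in: "x \<in> Q \<Longrightarrow> ((\<lambda>y. m y y) ^^ i) x \<in> Q"
  by (induction i) (simp_all add: closed)

lemma pow_iter_square:
  "x \<in> Q \<Longrightarrow> pow (((\<lambda>y. m y y) ^^ i) x) n = pow x (2 ^ i * n)"
proof (induction i arbitrary: n)
  case (Suc i)
  then show ?case
    using iter_square_in[OF Suc.prems, of i]
    by (simp add: pow_square mult.assoc mult.left_commute)
qed simp

end

lemma eq_double_if_dvd_double:
  fixes a b :: nat
  assumes "0 < a" "a dvd b" "b dvd 2 * a" "\<not> b dvd a"
  shows "b = 2 * a"
proof -
  obtain t where t: "b = a * t"
    using assms(2) by (rule dvdE)
  then have "t dvd 2"
    using assms(1,3) by (simp add: mult.commute)
  then have "t = 1 \<or> t = 2"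
    using dvd_imp_le[of t 2] by (cases t) auto
  then show ?thesis
    using t assms(4) by auto
qed

locale odd_jordan_loop = finite_jordan_loop +
  assumes odd_card: "odd (card Q)"
begin

text \<open>By commutativity the left division a \<mapsto> a\<setminus>c is an involution; its fixed points are
  the square roots of c.\<close>

lemma square_surj:
  assumes c: "c \<in> Q" shows "\<exists>a\<in>Q. m a a = c"
proof -
  define f where "f a = (THE b. b \<in> Q \<and> m a b = c)" for a
  have f: "f a \<in> Q \<and> m a (f a) = c" if a: "a \<in> Q" for a
    unfolding f_def using theI'[of "\<lambda>b. b \<in> Q \<and> m a b = c"] left_div_unique a c by blast
  have "f (f a) = a" if a: "a \<in> Q" for a
    unfolding f_def[of "f a"]
  proof (rule the_equality)
    show "a \<in> Q \<and> m (f a) a = c"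
      using a f[OF a] comm by auto
    show "b = a" if "b \<in> Q \<and> m (f a) b = c" for b
      using that a f[OF a] comm left_cancel by metis
  qed
  then obtain a where "a \<in> Q" "f a = a"
    using involution_has_fixpoint[OF finite_Q odd_card] f by blast
  then show ?thesis
    using f by metis
qed

lemma even_ord_imp_square_root_of_double_ord:
  assumes x: "x \<in> Q" and even: "even (ord x)"
  shows "\<exists>w\<in>Q. ord w = 2 * ord x"
proof -
  obtain w where w: "w \<in> Q" "m w w = x"
    using square_surj x by blast
  have dvd_iff: "ord x dvd n \<longleftrightarrow> ord w dvd 2 * n" for n
    using ord_square_dvd_iff[OF w(1)] w(2) by simp
  obtain c where c: "ord x = 2 * c"
    using even by blast
  have "\<not> ord x dvd c"
    using c ord_pos[OF x] by (auto dest: dvd_imp_le)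
  moreover have "ord w dvd 2 * c \<longleftrightarrow> ord x dvd c"
    using dvd_iff[of c] by simp
  ultimately have "\<not> ord w dvd ord x"
    using c by simp
  then have "ord w = 2 * ord x"
    using eq_double_if_dvd_double[OF ord_pos[OF x]] dvd_iff[of "ord w"] dvd_iff[of "ord x"]
    by simp
  then show ?thesis
    using w(1) by blast
qed

lemma ord_odd:
  assumes x: "x \<in> Q" shows "odd (ord x)"
proof
  assume even: "even (ord x)"
  have "\<exists>w\<in>Q. ord w = 2 ^ n * ord x" for n
  proof (induction n)
    case (Suc n)
    then obtain w where "w \<in> Q" "ord w = 2 ^ n * ord x"
      by blast
    then show ?case
      using even_ord_imp_square_root_of_double_ord[of w] even by (simp add: mult.assoc)
  qed (use x in auto)
  then obtain w where "w \<in> Q" "ord w = 2 ^ card Q * ord x"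
    by blast
  moreover have "card Q < 2 ^ card Q * ord x"
    using less_exp[of "card Q"] ord_pos[OF x]
    by (metis less_le_trans mult.right_neutral mult_le_mono2 Suc_leI One_nat_def)
  ultimately show False
    using ord_le_card by fastforce
qed

lemma powers_square:
  assumes x: "x \<in> Q" shows "powers (m x x) = powers x"
proof -
  obtain k where k: "ord x + 1 = 2 * k"
    using ord_odd[OF x] by (metis evenE odd_even_add odd_one)
  have "pow x n = pow (m x x) (k * n)" for n
  proof -
    have "2 * (k * n) = (ord x + 1) * n"
      by (simp only: k mult.assoc)
    then have "pow (m x x) (k * n) = pow x (n + ord x * n)"
      using pow_square[OF x] by simp
    also have "\<dots> = pow x n"
      using pow_mod_ord[OF x, of "n + ord x * n"] pow_mod_ord[OF x, of n] by simp
    finally show ?thesis by simp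
  qed
  then have "powers x \<subseteq> powers (m x x)"
    unfolding powers_def by blast
  moreover have "powers (m x x) \<subseteq> powers x"
    unfolding powers_def using pow_square[OF x] by auto
  ultimately show ?thesis by blast
qed

lemma powers_iter_square: "x \<in> Q \<Longrightarrow> powers (((\<lambda>y. m y y) ^^ i) x) = powers x"
  by (induction i) (simp_all add: powers_square iter_square_in)

lemma two_power_mult_preserves_powers:
  assumes x: "x \<in> Q" shows "m (pow x (2 ^ Suc i)) ` powers x \<subseteq> powers x"
proof -
  define s where "s = ((\<lambda>y. m y y) ^^ i) x"
  have s: "s \<in> Q"
    unfolding s_def using iter_square_in[OF x] .
  have "pow x (2 ^ Suc i) = m s s"
    using pow_iter_square[OF x, of i 2] pow_2[OF s] by (simp add: s_def mult.commute)
  then show ?thesis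
    using square_mult_preserves_powers[OF s] powers_iter_square[OF x] by (simp add: s_def)
qed

lemma three_le_card_Q_minus_powers:
  assumes x: "x \<in> Q" "x \<noteq> e" and proper: "powers x \<noteq> Q"
  shows "3 \<le> card (Q - powers x)"
proof -
  have "ord x \<noteq> 1" "0 < ord x" "odd (ord x)"
    using ord_unit_iff ord_pos ord_odd x by auto
  then have "2 < ord x"
    by (cases "ord x = 2") auto
  then have "m x x \<noteq> e"
    using pow_ne_unit_below_ord[of 2 x] pow_2[OF x(1)] by simp
  moreover have "m x x \<noteq> x"
    using left_cancel[OF x(1) x(1) unit_in] right_unit[OF x(1)] x(2) by auto
  ultimately have "card {e, x, m x x} = 3"
    using x(2) by simp
  moreover have "card {e, x, m x x} \<le> card (Q - powers x)"
  proof (rule card_le_card_complement)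
    show "{e, x, m x x} \<subseteq> Q" "powers x \<subseteq> Q"
      using unit_in closed powers_subset x(1) by auto
    show "m u ` powers x \<subseteq> powers x" if "u \<in> {e, x, m x x}" for u
      using that left_unit powers_subset[OF x(1)] mult_preserves_powers[of x]
        square_mult_preserves_powers[OF x(1)] by (auto simp: image_subset_iff)
  qed (fact proper)
  ultimately show ?thesis by simp
qed

lemma left_mult_preserves_powers_if_two_generates:
  assumes x: "x \<in> Q" and u: "u \<in> powers x"
    and two_generates: "\<forall>j\<in>{1..<ord x}. \<exists>i. 2 ^ Suc i mod ord x = j"
  shows "m u ` powers x \<subseteq> powers x"
proof -
  obtain n where n: "u = pow x (n mod ord x)"
    using u pow_mod_ord[OF x] by (auto simp: powers_def)
  consider "n mod ord x = 0" | "n mod ord x \<in> {1..<ord x}"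
    using mod_less_divisor[OF ord_pos[OF x]] by force
  then show ?thesis
  proof cases
    case 1
    then show ?thesis
      using n left_unit powers_subset[OF x] by auto
  next
    case 2
    then obtain i where "2 ^ Suc i mod ord x = n mod ord x"
      using two_generates by blast
    then have "u = pow x (2 ^ Suc i)"
      using n pow_mod_ord[OF x] by metis
    then show ?thesis
      using two_power_mult_preserves_powers[OF x] by simp
  qed
qed

lemma ord_le_card_Q_minus_powers_if_two_generates:
  assumes x: "x \<in> Q" and proper: "powers x \<noteq> Q"
    and two_generates: "\<forall>j\<in>{1..<ord x}. \<exists>i. 2 ^ Suc i mod ord x = j"
  shows "ord x \<le> card (Q - powers x)"
proof -
  have "card (powers x) \<le> card (Q - powers x)"
  proof (rule card_le_card_complement[OF powers_subset[OF x] powers_subset[OF x] proper])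
    show "m u ` powers x \<subseteq> powers x" if "u \<in> powers x" for u
      by (rule left_mult_preserves_powers_if_two_generates[OF x that two_generates])
  qed
  then show ?thesis
    using card_powers[OF x] by simp
qed

end

lemma odd_jordan_loopI:
  assumes J: "jordan_loop Q m e" and "finite Q" "odd (card Q)"
  shows "odd_jordan_loop Q m e"
proof unfold_locales
  show "loop Q m e" "finite Q" "odd (card Q)"
    using assms by (simp_all add: jordan_loop_def)
  show "m a b = m b a" if "a \<in> Q" "b \<in> Q" for a b
    using J that by (simp add: jordan_loop_def)
  show "m (m a a) (m b a) = m (m (m a a) b) a" if "a \<in> Q" "b \<in> Q" for a b
    using J that unfolding jordan_loop_def by blast
qed

lemma two_generates_units_mod_5: "\<forall>j\<in>{1..<5::nat}. \<exists>i. 2 ^ Suc i mod 5 = j"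
proof
  fix j :: nat assume "j \<in> {1..<5}"
  then consider "j = 1" | "j = 2" | "j = 3" | "j = 4"
    by force
  then show "\<exists>i. 2 ^ Suc i mod 5 = j"
    by cases (rule exI[of _ 3], simp, rule exI[of _ 0], simp, rule exI[of _ 2], simp,
      rule exI[of _ 1], simp)
qed

theorem lemma3p6:
  fixes Q :: "'a set" and m :: "'a \<Rightarrow> 'a \<Rightarrow> 'a" and e :: 'a
  assumes "jordan_loop Q m e" and "finite Q" and "card Q = 9"
  shows "(\<forall>x\<in>Q. cube m x = e) \<or> (\<exists>x\<in>Q. gen_subloop Q m e x = Q)"
proof -
  interpret odd_jordan_loop Q m e
    using assms by (intro odd_jordan_loopI) simp_all
  have "ord x = 9" if x: "x \<in> Q" and cube: "cube m x \<noteq> e" for x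
  proof -
    have "x \<noteq> e"
      using cube left_unit[OF unit_in] by (auto simp: cube_def)
    have "ord x \<noteq> 1" "ord x \<noteq> 3"
      using ord_unit_iff[OF x] \<open>x \<noteq> e\<close> pow_ord[OF x] pow_3[OF x] cube by auto
    have "ord x \<notin> {5, 7}"
    proof
      assume "ord x \<in> {5, 7}"
      then have proper: "powers x \<noteq> Q" and complement: "card (Q - powers x) = 9 - ord x"
        using card_powers[OF x] card_Q_minus_powers[OF x] assms(3) by auto
      have "ord x \<noteq> 5"
        using ord_le_card_Q_minus_powers_if_two_generates[OF x proper]
          two_generates_units_mod_5 complement by fastforce
      then show False
        using three_le_card_Q_minus_powers[OF x \<open>x \<noteq> e\<close> proper] complement \<open>ord x \<in> {5, 7}\<close>
        by auto
    qed
    moreover obtain r where "ord x = 2 * r + 1"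
      using ord_odd[OF x] by (rule oddE)
    ultimately show "ord x = 9"
      using ord_le_card[OF x] assms(3) \<open>ord x \<noteq> 1\<close> \<open>ord x \<noteq> 3\<close> by auto
  qed
  then show ?thesis
    using gen_subloop_if_ord_eq_card assms(3) by metis
qed

end
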